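(* Let $g:[0,1]\to\mathbb{R}$ be strictly monotone in a neighborhood of $x_0\in[0,1]$, let $d\in(0,1)$, $a\ne0$, and $x_m=x_0+ad^m$, with $x_m\in[0,1]$ for all large $m$. Suppose that $\frac{g(x_m)-g(x_0)}{x_m-x_0}\to L$ as $m\to\infty$, where $L\in\{0,+\infty,-\infty\}$. If $a<0$, then the left derivative of $g$ at $x_0$ exists and equals $L$; if $a>0$, then the right derivative of $g$ at $x_0$ exists and equals $L$. (One-sided monotonicity on the relevant side of $x_0$ suffices for the corresponding one-sided conclusion.) *)

theory Defs
  imports "HOL-Analysis.Analysis"
begin

end

theory Submission
  imports Defs
begin

(* Write x = x0 + a t with t > 0. Every small t lies in a window d^(m+1) < t <= d^m, and on such
   a window monotonicity of g traps the difference quotient at x between d times the sampled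
   quotient at x_(m+1) and 1/d times the sampled quotient at x_m (in some order). Both bounds tend
   to L because multiplying by a positive constant does not move the limits 0 and +-infinity, so
   the quotient is squeezed to L as t -> 0+. *)

lemma difference_quotient_bounds_mono:
  fixes F :: "real \<Rightarrow> real"
  assumes mono: "mono_on {0..v} F" and F0: "F 0 = 0"
    and u: "0 < u" "u \<le> t" "t \<le> v"
  shows "F u / v \<le> F t / t" "F t / t \<le> F v / u"
proof -
  have "F 0 \<le> F u" "F u \<le> F t" "F t \<le> F v"
    using u by (auto intro!: mono_onD[OF mono])
  then have "F u / v \<le> F u / t" "F u / t \<le> F t / t" "F t / t \<le> F v / t" "F v / t \<le> F v / u"
    using u F0 by (auto intro: divide_left_mono divide_right_mono)
  then show "F u / v \<le> F t / t" "F t / t \<le> F v / u" by linarith+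
qed

lemma difference_quotient_between_monotone:
  fixes F :: "real \<Rightarrow> real"
  assumes mono: "mono_on {0..v} F \<or> antimono_on {0..v} F" and F0: "F 0 = 0"
    and u: "0 < u" "u \<le> t" "t \<le> v"
  shows "min (F u / v) (F v / u) \<le> F t / t \<and> F t / t \<le> max (F u / v) (F v / u)"
  using mono
proof
  assume "mono_on {0..v} F"
  from difference_quotient_bounds_mono[OF this F0 u] show ?thesis by simp
next
  assume "antimono_on {0..v} F"
  then have "mono_on {0..v} (\<lambda>x. - F x)"
    by (auto simp: monotone_on_def)
  from difference_quotient_bounds_mono[OF this _ u] F0 show ?thesis by simp
qed

lemma tendsto_ereal_cmult_pos_zero_infinity:
  fixes f :: "'a \<Rightarrow> real" and L :: ereal
  assumes "((\<lambda>x. ereal (f x)) \<longlongrightarrow> L) F" "L \<in> {0, \<infinity>, -\<infinity>}" "0 < c"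
  shows "((\<lambda>x. ereal (c * f x)) \<longlongrightarrow> L) F"
proof -
  have "((\<lambda>x. ereal c * ereal (f x)) \<longlongrightarrow> ereal c * L) F"
    using assms(1) by (intro tendsto_cmult_ereal) auto
  moreover have "ereal c * L = L"
    using assms(2,3) by auto
  ultimately show ?thesis by simp
qed

definition geometric_index :: "real \<Rightarrow> real \<Rightarrow> nat" where
  "geometric_index d t = (LEAST n. d ^ Suc n < t)"

lemma geometric_index_bounds:
  fixes d t :: real
  assumes d: "0 < d" "d < 1" and t: "0 < t" "t \<le> 1"
  shows "d ^ Suc (geometric_index d t) < t" "t \<le> d ^ geometric_index d t"
proof -
  obtain n where "d ^ n < t" using real_arch_pow_inv[OF t(1) d(2)] by blast
  moreover have "d ^ Suc n \<le> d ^ n" using d by (intro power_decreasing) auto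
  ultimately have "d ^ Suc n < t" by linarith
  then show "d ^ Suc (geometric_index d t) < t"
    unfolding geometric_index_def by (rule LeastI)
  show "t \<le> d ^ geometric_index d t"
  proof (cases "geometric_index d t")
    case (Suc k)
    then have "\<not> d ^ Suc k < t"
      unfolding geometric_index_def by (metis lessI not_less_Least)
    then show ?thesis using Suc by simp
  qed (use t in simp)
qed

lemma filterlim_geometric_index:
  fixes d :: real
  assumes d: "0 < d" "d < 1"
  shows "filterlim (geometric_index d) sequentially (at_right 0)"
  unfolding filterlim_at_top
proof
  fix N
  have "\<forall>\<^sub>F t in at_right 0. 0 < t \<and> t < d ^ N"
    using d by (intro eventually_at_rightI[of _ "d ^ N"]) auto
  then show "\<forall>\<^sub>F t in at_right 0. N \<le> geometric_index d t"
  proof eventually_elim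
    case (elim t)
    show ?case
    proof (rule ccontr)
      assume "\<not> N \<le> geometric_index d t"
      then have "d ^ N \<le> d ^ Suc (geometric_index d t)"
        using d by (intro power_decreasing) auto
      moreover have "t \<le> 1"
        using elim d power_le_one[of d N] by linarith
      then have "d ^ Suc (geometric_index d t) < t"
        using geometric_index_bounds(1)[OF d] elim by blast
      ultimately show False using elim by simp
    qed
  qed
qed

lemma tendsto_at_right_0_of_geometric_samples:
  fixes F :: "real \<Rightarrow> real" and L :: ereal
  assumes d: "0 < d" "d < 1" and e: "0 < e"
    and mono: "mono_on {0..e} F \<or> antimono_on {0..e} F" and F0: "F 0 = 0"
    and samples: "((\<lambda>m. ereal (F (d ^ m) / d ^ m)) \<longlongrightarrow> L) sequentially"
    and L: "L \<in> {0, \<infinity>, -\<infinity>}"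
  shows "((\<lambda>t. ereal (F t / t)) \<longlongrightarrow> L) (at_right 0)"
proof -
  define S where "S m = F (d ^ m) / d ^ m" for m
  define k where "k = geometric_index d"
  have k: "filterlim k sequentially (at_right 0)"
    unfolding k_def using d by (rule filterlim_geometric_index)
  have "((\<lambda>t. ereal (S (Suc (k t)))) \<longlongrightarrow> L) (at_right 0)"
    using filterlim_compose[OF LIMSEQ_Suc[OF samples] k] by (simp add: S_def)
  then have lower: "((\<lambda>t. ereal (d * S (Suc (k t)))) \<longlongrightarrow> L) (at_right 0)"
    using L d by (intro tendsto_ereal_cmult_pos_zero_infinity) auto
  have "((\<lambda>t. ereal (S (k t))) \<longlongrightarrow> L) (at_right 0)"
    using filterlim_compose[OF samples k] by (simp add: S_def)
  then have upper: "((\<lambda>t. ereal (1 / d * S (k t))) \<longlongrightarrow> L) (at_right 0)"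
    using L d by (intro tendsto_ereal_cmult_pos_zero_infinity) auto
  have "((\<lambda>t. d ^ k t) \<longlongrightarrow> 0) (at_right 0)"
    using filterlim_compose[OF LIMSEQ_power_zero[of d] k] d by simp
  then have "\<forall>\<^sub>F t in at_right 0. d ^ k t < e"
    using e by (rule order_tendstoD)
  moreover have "\<forall>\<^sub>F t in at_right 0. 0 < t \<and> t \<le> (1::real)"
    by (rule eventually_at_rightI[of _ 1]) auto
  ultimately have between: "\<forall>\<^sub>F t in at_right 0.
      min (d * S (Suc (k t))) (1 / d * S (k t)) \<le> F t / t \<and>
      F t / t \<le> max (d * S (Suc (k t))) (1 / d * S (k t))"
  proof eventually_elim
    case (elim t)
    have "d ^ Suc (k t) < t" "t \<le> d ^ k t"
      using geometric_index_bounds[OF d] elim unfolding k_def by auto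
    moreover have "mono_on {0..d ^ k t} F \<or> antimono_on {0..d ^ k t} F"
      using mono monotone_on_subset[of "{0..e}" _ _ F "{0..d ^ k t}"] elim by auto
    moreover have "F (d ^ Suc (k t)) / d ^ k t = d * S (Suc (k t))"
      "F (d ^ k t) / d ^ Suc (k t) = 1 / d * S (k t)"
      using d unfolding S_def by (auto simp: field_simps)
    ultimately show ?case
      using difference_quotient_between_monotone[of "d ^ k t" F "d ^ Suc (k t)" t] F0 d
      by auto
  qed
  show ?thesis
  proof (rule tendsto_sandwich)
    show "\<forall>\<^sub>F t in at_right 0.
        min (ereal (d * S (Suc (k t)))) (ereal (1 / d * S (k t))) \<le> ereal (F t / t)"
      using between by eventually_elim (simp add: min_le_iff_disj)
    show "\<forall>\<^sub>F t in at_right 0.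
        ereal (F t / t) \<le> max (ereal (d * S (Suc (k t)))) (ereal (1 / d * S (k t)))"
      using between by eventually_elim (simp add: le_max_iff_disj)
    show "((\<lambda>t. min (ereal (d * S (Suc (k t)))) (ereal (1 / d * S (k t)))) \<longlongrightarrow> L) (at_right 0)"
      using tendsto_min[OF lower upper] by simp
    show "((\<lambda>t. max (ereal (d * S (Suc (k t)))) (ereal (1 / d * S (k t)))) \<longlongrightarrow> L) (at_right 0)"
      using tendsto_max[OF lower upper] by simp
  qed
qed

lemma monotone_on_affine_reparametrization:
  fixes g :: "real \<Rightarrow> real"
  assumes a: "a \<noteq> 0" and mono: "mono_on A g \<or> antimono_on A g"
    and A: "(\<lambda>t. x0 + a * t) ` T \<subseteq> A"
  shows "mono_on T (\<lambda>t. (g (x0 + a * t) - c) / a) \<or> antimono_on T (\<lambda>t. (g (x0 + a * t) - c) / a)"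
  using mono A a unfolding monotone_on_def image_subset_iff
  by (cases "a > 0") (auto simp: divide_simps)

lemma tendsto_difference_quotient_of_geometric_samples:
  fixes g :: "real \<Rightarrow> real" and L :: ereal
  assumes a: "a \<noteq> 0" and d: "0 < d" "d < 1" and e: "0 < e"
    and mono: "mono_on A g \<or> antimono_on A g" and A: "(\<lambda>t. x0 + a * t) ` {0..e} \<subseteq> A"
    and samples: "((\<lambda>m. ereal ((g (x0 + a * d ^ m) - g x0) / ((x0 + a * d ^ m) - x0))) \<longlongrightarrow> L)
                    sequentially"
    and L: "L \<in> {0, \<infinity>, -\<infinity>}"
  shows "((\<lambda>x. ereal ((g x - g x0) / (x - x0))) \<longlongrightarrow> L) (at x0 within {x. sgn (x - x0) = sgn a})"
proof -
  define F where "F t = (g (x0 + a * t) - g x0) / a" for t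
  have F_mono: "mono_on {0..e} F \<or> antimono_on {0..e} F"
    unfolding F_def using a mono A by (rule monotone_on_affine_reparametrization)
  have F_samples: "((\<lambda>m. ereal (F (d ^ m) / d ^ m)) \<longlongrightarrow> L) sequentially"
    using samples by (simp add: F_def)
  have F_lim: "((\<lambda>t. ereal (F t / t)) \<longlongrightarrow> L) (at_right 0)"
    by (rule tendsto_at_right_0_of_geometric_samples[OF d e F_mono _ F_samples L]) (simp add: F_def)
  have "filterlim (\<lambda>x. (x - x0) / a) (at_right 0) (at x0 within {x. sgn (x - x0) = sgn a})"
    unfolding filterlim_at
  proof
    show "\<forall>\<^sub>F x in at x0 within {x. sgn (x - x0) = sgn a}. (x - x0) / a \<in> {0<..} \<and> (x - x0) / a \<noteq> 0"
      using a by (auto simp: eventually_at_filter sgn_if zero_less_divide_iff split: if_splits)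
    show "((\<lambda>x. (x - x0) / a) \<longlongrightarrow> 0) (at x0 within {x. sgn (x - x0) = sgn a})"
      using a by (auto intro!: tendsto_eq_intros)
  qed
  from filterlim_compose[OF F_lim this] show ?thesis
    using a by (simp add: F_def)
qed

lemma tendsto_difference_quotient_within_unit_interval:
  fixes g :: "real \<Rightarrow> real" and L :: ereal
  assumes a: "a \<noteq> 0" and d: "0 < d" "d < 1"
    and x0: "x0 \<in> {0..1}" and xm: "x0 + a * d ^ m \<in> {0..1}"
    and mono: "strict_mono_on (N \<inter> {0..1}) g \<or> strict_antimono_on (N \<inter> {0..1}) g"
    and \<epsilon>: "0 < \<epsilon>" and N: "\<And>t. 0 \<le> t \<Longrightarrow> t \<le> \<epsilon> / \<bar>a\<bar> \<Longrightarrow> x0 + a * t \<in> N"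
    and samples: "((\<lambda>m. ereal ((g (x0 + a * d ^ m) - g x0) / ((x0 + a * d ^ m) - x0))) \<longlongrightarrow> L)
                    sequentially"
    and L: "L \<in> {0, \<infinity>, -\<infinity>}"
  shows "((\<lambda>x. ereal ((g x - g x0) / (x - x0))) \<longlongrightarrow> L) (at x0 within {x. sgn (x - x0) = sgn a})"
proof -
  have "x0 + a * t \<in> {0..1}" if "0 \<le> t" "t \<le> d ^ m" for t
    using x0 xm that mult_left_mono[OF that(2), of a] mult_left_mono_neg[OF that(2), of a]
      mult_nonneg_nonneg[OF _ that(1), of a] mult_nonpos_nonneg[OF _ that(1), of a]
    by (smt (verit) atLeastAtMost_iff)
  then have "(\<lambda>t. x0 + a * t) ` {0..min (d ^ m) (\<epsilon> / \<bar>a\<bar>)} \<subseteq> N \<inter> {0..1}"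
    using N by auto
  moreover have "0 < min (d ^ m) (\<epsilon> / \<bar>a\<bar>)"
    using a d \<epsilon> by simp
  moreover have "mono_on (N \<inter> {0..1}) g \<or> antimono_on (N \<inter> {0..1}) g"
    using mono by (auto simp: strict_mono_iff_mono strict_antimono_iff_antimono)
  ultimately show ?thesis
    using tendsto_difference_quotient_of_geometric_samples[OF a d _ _ _ samples L] by blast
qed

theorem lemma3:
  fixes g :: "real \<Rightarrow> real" and x0 a d :: real and L :: ereal
  assumes x0: "x0 \<in> {0..1}"
    and d: "0 < d" "d < 1"
    and a: "a \<noteq> 0"
    and xm_in: "\<forall>\<^sub>F m in sequentially. x0 + a * d ^ m \<in> {0..1}"
    and lim: "((\<lambda>m. ereal ((g (x0 + a * d ^ m) - g x0) / ((x0 + a * d ^ m) - x0)))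
                 \<longlongrightarrow> L) sequentially"
    and L: "L \<in> {0, \<infinity>, -\<infinity>}"
  shows "(a < 0 \<and> (\<exists>\<epsilon>>0. strict_mono_on ({x0 - \<epsilon>..x0} \<inter> {0..1}) g
                          \<or> strict_antimono_on ({x0 - \<epsilon>..x0} \<inter> {0..1}) g)
           \<longrightarrow> ((\<lambda>x. ereal ((g x - g x0) / (x - x0))) \<longlongrightarrow> L) (at x0 within {0..<x0}))
       \<and> (a > 0 \<and> (\<exists>\<epsilon>>0. strict_mono_on ({x0..x0 + \<epsilon>} \<inter> {0..1}) g
                          \<or> strict_antimono_on ({x0..x0 + \<epsilon>} \<inter> {0..1}) g)
           \<longrightarrow> ((\<lambda>x. ereal ((g x - g x0) / (x - x0))) \<longlongrightarrow> L) (at x0 within {x0<..1}))"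
proof -
  let ?q = "\<lambda>x. ereal ((g x - g x0) / (x - x0))"
  obtain m where xm: "x0 + a * d ^ m \<in> {0..1}"
    using eventually_happens'[OF sequentially_bot xm_in] by blast
  note side = tendsto_difference_quotient_within_unit_interval[OF a d x0 xm _ _ _ lim L]
  show ?thesis
  proof (intro conjI impI; elim conjE exE)
    fix \<epsilon> assume "a < 0" "\<epsilon> > 0" "strict_mono_on ({x0 - \<epsilon>..x0} \<inter> {0..1}) g
                          \<or> strict_antimono_on ({x0 - \<epsilon>..x0} \<inter> {0..1}) g"
    then have "(?q \<longlongrightarrow> L) (at x0 within {x. sgn (x - x0) = sgn a})"
      by (intro side[of "{x0 - \<epsilon>..x0}" \<epsilon>]) (auto simp: field_simps mult_le_0_iff)
    then show "(?q \<longlongrightarrow> L) (at x0 within {0..<x0})"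
      by (rule tendsto_within_subset) (use \<open>a < 0\<close> in auto)
  next
    fix \<epsilon> assume "a > 0" "\<epsilon> > 0" "strict_mono_on ({x0..x0 + \<epsilon>} \<inter> {0..1}) g
                          \<or> strict_antimono_on ({x0..x0 + \<epsilon>} \<inter> {0..1}) g"
    then have "(?q \<longlongrightarrow> L) (at x0 within {x. sgn (x - x0) = sgn a})"
      by (intro side[of "{x0..x0 + \<epsilon>}" \<epsilon>]) (auto simp: field_simps)
    then show "(?q \<longlongrightarrow> L) (at x0 within {x0<..1})"
      by (rule tendsto_within_subset) (use \<open>a > 0\<close> in auto)
  qed
qed

end
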